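(* Let $n \ge 2$ and let $Q(x) = x_1x_2 + x_3x_4 + \cdots + x_{2n-1}x_{2n}$ be the hyperbolic quadratic form on $V(2n,2)$, with associated symmetric bilinear form $B(x,y) = Q(x+y)-Q(x)-Q(y)$ and orthogonality $\perp$ with respect to $B$. Let $\Pi$ and $\Sigma$ be two totally singular $n$-dimensional subspaces with $\Pi \cap \Sigma = 0$. For a non-singular point $X = \langle x\rangle$ (i.e. $Q(x) \neq 0$), put $G = X^\perp \cap \Pi$, $H = X^\perp \cap \Sigma$, and let $P = G^\perp \cap \Sigma$; define $f(X) = (P,H)$. Then $P$ is a $1$-dimensional subspace of $\Sigma$, $H$ is an $(n-1)$-dimensional subspace of $\Sigma$, and $P \not\subseteq H$, i.e. $f(X)$ is a point-hyperplane antiflag of $\Sigma \cong V(n,2)$.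
   Context: Subspaces are taken in the vector-space sense: points are $1$-dimensional subspaces, hyperplanes of $\Sigma$ are its $(n-1)$-dimensional subspaces. A point $\langle x\rangle$ is singular if $Q(x)=0$; a subspace is totally singular if all its points are singular. A point-hyperplane antiflag of a vector space $V$ is a pair $(P,H)$ with $P$ a $1$-dimensional subspace, $H$ a hyperplane, and $P \not\subseteq H$. *)

theory Defs
  imports Complex_Main "HOL-Library.Z2" "HOL-Library.Function_Algebras"
begin

text \<open>Vectors of V(2n,2) are functions nat => bit
  vanishing at indices >= 2n (coordinates x_1..x_2n are stored at indices 0..2n-1);
  addition is pointwise (Function_Algebras), scalar multiplication is scaleV.\<close>

definition scaleV :: "bit \<Rightarrow> (nat \<Rightarrow> bit) \<Rightarrow> (nat \<Rightarrow> bit)" where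
  "scaleV c x = (\<lambda>i. c * x i)"

lemma vector_space_scaleV: "vector_space scaleV"
  by unfold_locales (auto simp: scaleV_def fun_eq_iff algebra_simps)

definition Vsp :: "nat \<Rightarrow> (nat \<Rightarrow> bit) set" where
  "Vsp m = {x. \<forall>i\<ge>m. x i = 0}"

abbreviation spanV :: "(nat \<Rightarrow> bit) set \<Rightarrow> (nat \<Rightarrow> bit) set" where
  "spanV \<equiv> module.span scaleV"

abbreviation dimV :: "(nat \<Rightarrow> bit) set \<Rightarrow> nat" where
  "dimV \<equiv> vector_space.dim scaleV"

definition is_subspace :: "nat \<Rightarrow> (nat \<Rightarrow> bit) set \<Rightarrow> bool" where
  "is_subspace n S \<longleftrightarrow> S \<subseteq> Vsp (2*n) \<and> module.subspace scaleV S"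

definition Qf :: "nat \<Rightarrow> (nat \<Rightarrow> bit) \<Rightarrow> bit" where
  "Qf n x = (\<Sum>i<n. x (2*i) * x (2*i+1))"

definition Bf :: "nat \<Rightarrow> (nat \<Rightarrow> bit) \<Rightarrow> (nat \<Rightarrow> bit) \<Rightarrow> bit" where
  "Bf n x y = Qf n (x + y) - Qf n x - Qf n y"

definition perp :: "nat \<Rightarrow> (nat \<Rightarrow> bit) set \<Rightarrow> (nat \<Rightarrow> bit) set" where
  "perp n S = {y \<in> Vsp (2*n). \<forall>x\<in>S. Bf n x y = 0}"

definition totally_singular :: "nat \<Rightarrow> (nat \<Rightarrow> bit) set \<Rightarrow> bool" where
  "totally_singular n S \<longleftrightarrow> is_subspace n S \<and> (\<forall>x\<in>S. Qf n x = 0)"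

end

theory Submission
  imports Defs
begin

text \<open>Since \<open>\<Pi>\<close> and \<open>\<Sigma>\<close> are complementary, write \<open>x = a + b\<close> with \<open>a \<in> \<Pi>\<close>, \<open>b \<in> \<Sigma>\<close>.
  Both are totally singular, so \<open>Q(x) = B(a,b) = 1\<close>; on \<open>\<Sigma>\<close> the functional \<open>B(x,-)\<close>
  agrees with \<open>B(a,-)\<close>, hence \<open>H\<close> is the kernel of a functional on \<open>\<Sigma>\<close> that does not
  vanish at \<open>b\<close>: a hyperplane of \<open>\<Sigma>\<close> missing \<open>b\<close>. Likewise \<open>G\<close> is the kernel of
  \<open>B(-,b)\<close> on \<open>\<Pi>\<close>. As \<open>B\<close> pairs \<open>\<Pi>\<close> and \<open>\<Sigma>\<close> nondegenerately, a vector \<open>s \<in> \<Sigma>\<close>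
  outside \<open>\<langle>b\<rangle>\<close> gives a functional \<open>B(-,s)\<close> on \<open>\<Pi>\<close> independent of \<open>B(-,b)\<close>, so it
  does not vanish on \<open>G\<close>. Thus \<open>P = \<langle>b\<rangle>\<close>, and \<open>P \<not>\<subseteq> H\<close>.\<close>

interpretation V: vector_space scaleV by (rule vector_space_scaleV)

lemma add_self_fun_bit [simp]: "(f :: nat \<Rightarrow> bit) + f = 0"
  by (auto simp: fun_eq_iff)

lemma add_eq_0_iff_eq_fun_bit: "(f :: nat \<Rightarrow> bit) + g = 0 \<longleftrightarrow> f = g"
  by (metis add_self_fun_bit add.assoc add_0 add.commute)

lemma scaleV_bit_cases: "scaleV c y = (if c = 0 then 0 else y)"
  by (cases c) (auto simp: scaleV_def fun_eq_iff)

lemma spanV_singleton: "spanV {b} = {0, b}"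
  unfolding V.span_singleton scaleV_bit_cases by (auto intro: range_eqI[of _ _ 0] range_eqI[of _ _ 1])

lemma Bf_expand: "Bf n x y = (\<Sum>i<n. x (2*i) * y (2*i+1) + y (2*i) * x (2*i+1))"
proof -
  have "Bf n x y = (\<Sum>i<n. (x (2*i) + y (2*i)) * (x (2*i+1) + y (2*i+1))
                          - x (2*i) * x (2*i+1) - y (2*i) * y (2*i+1))"
    unfolding Bf_def Qf_def by (simp only: plus_fun_apply sum_subtractf)
  also have "\<dots> = (\<Sum>i<n. x (2*i) * y (2*i+1) + y (2*i) * x (2*i+1))"
    by (rule sum.cong[OF refl]) (simp only: algebra_simps)
  finally show ?thesis .
qed

lemma Bf_commute: "Bf n x y = Bf n y x"
  unfolding Bf_expand by (rule sum.cong[OF refl]) (simp only: algebra_simps)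

lemma Bf_add_left: "Bf n (x + y) z = Bf n x z + Bf n y z"
  unfolding Bf_expand by (simp only: plus_fun_apply sum.distrib[symmetric] algebra_simps)

lemma Bf_add_right: "Bf n z (x + y) = Bf n z x + Bf n z y"
  using Bf_add_left Bf_commute by metis

lemma Bf_zero_right [simp]: "Bf n x 0 = 0"
  unfolding Bf_expand by simp

lemma Qf_add: "Qf n (x + y) = Qf n x + Qf n y + Bf n x y"
  unfolding Bf_def by algebra

definition basis_vec :: "nat \<Rightarrow> nat \<Rightarrow> bit" where
  "basis_vec j = (\<lambda>i. if i = j then 1 else 0)"

lemma basis_vec_in_Vsp: "j < m \<Longrightarrow> basis_vec j \<in> Vsp m"
  unfolding basis_vec_def Vsp_def by auto

lemma Vsp_subset_span_basis_vec: "Vsp m \<subseteq> spanV (basis_vec ` {..<m})"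
proof
  fix x assume x: "x \<in> Vsp m"
  have "x = (\<Sum>j<m. scaleV (x j) (basis_vec j))"
  proof
    fix i
    have "(\<Sum>j<m. scaleV (x j) (basis_vec j)) i = (\<Sum>j<m. if j = i then x i else 0)"
      by (induction m) (auto simp: scaleV_def basis_vec_def)
    then show "x i = (\<Sum>j<m. scaleV (x j) (basis_vec j)) i"
      using x by (auto simp: Vsp_def)
  qed
  also have "\<dots> \<in> spanV (basis_vec ` {..<m})"
    by (intro V.span_sum V.span_scale V.span_base) auto
  finally show "x \<in> spanV (basis_vec ` {..<m})" .
qed

lemma independent_in_Vsp_finite_card_le:
  assumes "B \<subseteq> Vsp m" "V.independent B"
  shows "finite B \<and> card B \<le> m"
proof -
  have "finite B \<and> card B \<le> card (basis_vec ` {..<m})"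
    using V.independent_span_bound[OF _ assms(2) order.trans[OF assms(1) Vsp_subset_span_basis_vec]]
    by simp
  moreover have "card (basis_vec ` {..<m}) \<le> m"
    using card_image_le[of "{..<m}" basis_vec] by simp
  ultimately show ?thesis by linarith
qed

lemma Bf_basis_vec_even:
  assumes "i < n" shows "Bf n x (basis_vec (2*i)) = x (2*i+1)"
proof -
  have "Bf n x (basis_vec (2*i)) = (\<Sum>j<n. if j = i then x (2*i+1) else 0)"
    unfolding Bf_expand basis_vec_def by (rule sum.cong) auto
  then show ?thesis using assms by simp
qed

lemma Bf_basis_vec_odd:
  assumes "i < n" shows "Bf n x (basis_vec (2*i+1)) = x (2*i)"
proof -
  have "Bf n x (basis_vec (2*i+1)) = (\<Sum>j<n. if j = i then x (2*i) else 0)"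
    unfolding Bf_expand basis_vec_def by (rule sum.cong) auto
  then show ?thesis using assms by simp
qed

lemma exists_Bf_eq_1:
  assumes "x \<in> Vsp (2*n)" "x \<noteq> 0"
  shows "\<exists>v\<in>Vsp (2*n). Bf n x v = 1"
proof -
  obtain k where k: "x k = 1" using assms(2) by (auto simp: fun_eq_iff)
  have "k < 2*n"
  proof (rule ccontr)
    assume "\<not> k < 2*n"
    then show False using assms(1) k by (simp add: Vsp_def)
  qed
  show ?thesis
  proof (cases "even k")
    case True
    then obtain i where "k = 2*i" by blast
    then show ?thesis using k \<open>k < 2*n\<close> Bf_basis_vec_odd[of i n x] basis_vec_in_Vsp[of "2*i+1"] by auto
  next
    case False
    then obtain i where "k = 2*i+1" using oddE by blast
    then show ?thesis using k \<open>k < 2*n\<close> Bf_basis_vec_even[of i n x] basis_vec_in_Vsp[of "2*i"] by auto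
  qed
qed

lemma perp_spanV_singleton: "perp n (spanV {x}) = {y \<in> Vsp (2*n). Bf n x y = 0}"
  unfolding perp_def spanV_singleton by (auto simp: Bf_commute[of n 0])

lemma Bf_eq_0_if_totally_singular:
  assumes "totally_singular n S" "x \<in> S" "y \<in> S"
  shows "Bf n x y = 0"
  using assms V.subspace_add unfolding totally_singular_def is_subspace_def Bf_def by fastforce

lemma (in vector_space) independent_Un_if_Int_zero:
  assumes S: "subspace S" and T: "subspace T" and ST: "S \<inter> T = {0}"
    and A: "A \<subseteq> S" "independent A" and B: "B \<subseteq> T" "independent B"
  shows "independent (A \<union> B)"
  unfolding independent_explicit_finite_subsets
proof (intro allI impI ballI)
  fix U u v
  assume U: "U \<subseteq> A \<union> B" "finite U" and sum0: "(\<Sum>v\<in>U. u v *s v) = 0" and v: "v \<in> U"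
  define a where "a = (\<Sum>v\<in>U \<inter> A. u v *s v)"
  define b where "b = (\<Sum>v\<in>U - A. u v *s v)"
  have "a + b = 0"
    unfolding a_def b_def using sum0 sum.Int_Diff[OF U(2)] by metis
  moreover have "a \<in> S" unfolding a_def
    using A(1) by (intro subspace_sum[OF S] subspace_scale[OF S]) auto
  moreover have "b \<in> T" unfolding b_def
    using B(1) U(1) by (intro subspace_sum[OF T] subspace_scale[OF T]) auto
  moreover have "a = - b" using \<open>a + b = 0\<close> by (simp add: eq_neg_iff_add_eq_0)
  ultimately have "a \<in> S \<inter> T" using subspace_neg[OF T] by simp
  then have "a = 0" "b = 0"
    using ST \<open>a + b = 0\<close> by auto
  moreover have "U \<inter> A \<subseteq> A" "U - A \<subseteq> B" "finite (U \<inter> A)" "finite (U - A)"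
    using U by auto
  ultimately have "u w = 0" if "w \<in> U" for w
    using that A(2)[unfolded independent_explicit_finite_subsets, rule_format, of "U \<inter> A" u w]
      B(2)[unfolded independent_explicit_finite_subsets, rule_format, of "U - A" u w]
    unfolding a_def b_def by (cases "w \<in> A") auto
  then show "u v = 0" using v .
qed

lemma (in vector_space) subset_span_if_independent_card_ge:
  assumes "V \<subseteq> span W" "finite W" "U \<subseteq> V" "independent U" "card W \<le> card U"
  shows "V \<subseteq> span U"
proof
  fix v assume "v \<in> V"
  show "v \<in> span U"
  proof (rule ccontr)
    assume v: "v \<notin> span U"
    have "insert v U \<subseteq> span W"
      using assms(1,3) \<open>v \<in> V\<close> by auto
    then have "finite (insert v U) \<and> card (insert v U) \<le> card W"
      by (rule independent_span_bound[OF assms(2) independent_insertI[OF v assms(4)]])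
    moreover have "v \<notin> U" using v span_base by auto
    ultimately show False using assms(5) by (auto simp: card_insert_if)
  qed
qed

lemma subspace_kernel_additive:
  fixes f :: "(nat \<Rightarrow> bit) \<Rightarrow> bit"
  assumes "V.subspace S" and add: "\<And>x y. f (x + y) = f x + f y"
  shows "V.subspace {y \<in> S. f y = 0}"
proof -
  have "f 0 = 0" using add[of 0 0] by simp
  then show ?thesis
    using assms V.subspace_0 V.subspace_add unfolding V.subspace_def
    by (auto simp: scaleV_bit_cases)
qed

lemma dim_kernel_additive:
  fixes f :: "(nat \<Rightarrow> bit) \<Rightarrow> bit"
  assumes S: "V.subspace S" "S \<subseteq> Vsp m" and add: "\<And>x y. f (x + y) = f x + f y"
    and b: "b \<in> S" "f b = 1"
  shows "dimV {y \<in> S. f y = 0} = dimV S - 1"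
proof -
  define K where "K = {y \<in> S. f y = 0}"
  have K: "V.subspace K" unfolding K_def by (intro subspace_kernel_additive S(1) add)
  obtain C where C: "C \<subseteq> K" "V.independent C" "K \<subseteq> spanV C" "card C = dimV K"
    using V.basis_exists by metis
  have "spanV C = K" using V.span_subspace C K by blast
  then have "b \<notin> spanV C" using b unfolding K_def by simp
  then have indep: "V.independent (insert b C)" using V.independent_insertI C(2) by blast
  have span_C: "spanV C \<subseteq> spanV (insert b C)" by (rule V.span_mono) blast
  have span_b: "b \<in> spanV (insert b C)" by (rule V.span_base) simp
  have "S \<subseteq> spanV (insert b C)"
  proof
    fix s assume "s \<in> S"
    have "s + b \<in> S" using V.subspace_add[OF S(1) \<open>s \<in> S\<close> b(1)] .
    show "s \<in> spanV (insert b C)"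
    proof (cases "f s = 0")
      case True
      then show ?thesis using \<open>s \<in> S\<close> \<open>spanV C = K\<close> span_C unfolding K_def by auto
    next
      case False
      then have "s + b \<in> spanV C"
        using \<open>s + b \<in> S\<close> \<open>spanV C = K\<close> b(2) add[of s b] unfolding K_def by simp
      then have "(s + b) + b \<in> spanV (insert b C)" using V.span_add span_C span_b by blast
      then show ?thesis by (simp add: add.assoc)
    qed
  qed
  moreover have "insert b C \<subseteq> S" using C(1) b(1) unfolding K_def by auto
  ultimately have "card (insert b C) = dimV S"
    using V.basis_card_eq_dim[OF _ _ indep] by simp
  moreover have "C \<subseteq> Vsp m" using C(1) S(2) unfolding K_def by auto
  then have "finite C" using independent_in_Vsp_finite_card_le C(2) by simp
  moreover have "b \<notin> C" using \<open>b \<notin> spanV C\<close> V.span_base by auto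
  ultimately show ?thesis using C(4) unfolding K_def by simp
qed

lemma exists_separating_additive:
  fixes f g :: "'a :: plus \<Rightarrow> bit"
  assumes closed: "\<And>p q. p \<in> S \<Longrightarrow> q \<in> S \<Longrightarrow> p + q \<in> S"
    and f: "\<And>p q. f (p + q) = f p + f q" and g: "\<And>p q. g (p + q) = g p + g q"
    and p1: "p1 \<in> S" "g p1 = 1" and p2: "p2 \<in> S" "f p2 + g p2 = 1"
  shows "\<exists>p\<in>S. f p = 0 \<and> g p = 1"
proof (cases "f p1 = 0")
  case False
  show ?thesis
  proof (cases "f p2 = 0")
    case False
    then have "f (p1 + p2) = 0" "g (p1 + p2) = 1"
      using \<open>f p1 \<noteq> 0\<close> p1(2) p2(2) f g by simp_all
    then show ?thesis using closed[OF p1(1) p2(1)] by blast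
  qed (use p2 in auto)
qed (use p1 in auto)

locale opposite_singular_subspaces =
  fixes n :: nat and Pi Sigma :: "(nat \<Rightarrow> bit) set"
  assumes Pi_singular: "totally_singular n Pi" and dim_Pi: "dimV Pi = n"
    and Sigma_singular: "totally_singular n Sigma" and dim_Sigma: "dimV Sigma = n"
    and Pi_Int_Sigma: "Pi \<inter> Sigma = {0}"
begin

lemma subspace_Pi: "V.subspace Pi" "Pi \<subseteq> Vsp (2*n)"
  and subspace_Sigma: "V.subspace Sigma" "Sigma \<subseteq> Vsp (2*n)"
  using Pi_singular Sigma_singular unfolding totally_singular_def is_subspace_def by auto

lemma Vsp_eq_sum:
  assumes "v \<in> Vsp (2*n)"
  shows "\<exists>a\<in>Pi. \<exists>b\<in>Sigma. v = a + b"
proof -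
  obtain BP where BP: "BP \<subseteq> Pi" "V.independent BP" "Pi \<subseteq> spanV BP" "card BP = n"
    using V.basis_exists dim_Pi by metis
  obtain BS where BS: "BS \<subseteq> Sigma" "V.independent BS" "Sigma \<subseteq> spanV BS" "card BS = n"
    using V.basis_exists dim_Sigma by metis
  have "finite BP" "finite BS"
    using independent_in_Vsp_finite_card_le[of BP "2*n"] independent_in_Vsp_finite_card_le[of BS "2*n"]
      BP(1,2) BS(1,2) subspace_Pi(2) subspace_Sigma(2) by auto
  moreover have "BP \<inter> BS = {}"
  proof -
    have "0 \<notin> BP" using BP(2) V.dependent_zero by blast
    moreover have "BP \<inter> BS \<subseteq> {0}" using BP(1) BS(1) Pi_Int_Sigma by blast
    ultimately show ?thesis by blast
  qed
  ultimately have "card (BP \<union> BS) = 2*n"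
    using BP(4) BS(4) card_Un_disjoint[of BP BS] by simp
  moreover have "V.independent (BP \<union> BS)"
    by (rule V.independent_Un_if_Int_zero[OF subspace_Pi(1) subspace_Sigma(1) Pi_Int_Sigma BP(1,2) BS(1,2)])
  moreover have "BP \<union> BS \<subseteq> Vsp (2*n)"
    using BP(1) BS(1) subspace_Pi(2) subspace_Sigma(2) by auto
  moreover have "card (basis_vec ` {..<2*n}) \<le> 2*n"
    using card_image_le[of "{..<2*n}" basis_vec] by simp
  ultimately have "Vsp (2*n) \<subseteq> spanV (BP \<union> BS)"
    by (intro V.subset_span_if_independent_card_ge[OF Vsp_subset_span_basis_vec]) auto
  then have "v \<in> spanV (BP \<union> BS)" using assms by auto
  then obtain a b where "a \<in> spanV BP" "b \<in> spanV BS" "v = a + b"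
    unfolding V.span_Un by auto
  moreover have "spanV BP = Pi" "spanV BS = Sigma"
    using V.span_subspace BP(1,3) BS(1,3) subspace_Pi(1) subspace_Sigma(1) by auto
  ultimately show ?thesis by auto
qed

lemma exists_Pi_Bf_eq_1:
  assumes t: "t \<in> Sigma" "t \<noteq> 0"
  shows "\<exists>p\<in>Pi. Bf n p t = 1"
proof -
  have "t \<in> Vsp (2*n)" using t(1) subspace_Sigma(2) by auto
  then obtain v where v: "v \<in> Vsp (2*n)" "Bf n t v = 1"
    using exists_Bf_eq_1 t(2) by auto
  obtain p s where ps: "p \<in> Pi" "s \<in> Sigma" "v = p + s"
    using Vsp_eq_sum[OF v(1)] by auto
  have "Bf n t s = 0" by (rule Bf_eq_0_if_totally_singular[OF Sigma_singular t(1) ps(2)])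
  then have "Bf n p t = 1" using v(2) ps(3) by (simp add: Bf_add_right Bf_commute[of n t p])
  then show ?thesis using ps(1) by auto
qed

lemma perp_kernel_Int_Sigma:
  assumes b: "b \<in> Sigma" "b \<noteq> 0"
  shows "perp n {p \<in> Pi. Bf n p b = 0} \<inter> Sigma = spanV {b}"
proof
  show "spanV {b} \<subseteq> perp n {p \<in> Pi. Bf n p b = 0} \<inter> Sigma"
    using b(1) subspace_Sigma V.subspace_0 unfolding spanV_singleton perp_def by auto
next
  show "perp n {p \<in> Pi. Bf n p b = 0} \<inter> Sigma \<subseteq> spanV {b}"
  proof
    fix s assume s: "s \<in> perp n {p \<in> Pi. Bf n p b = 0} \<inter> Sigma"
    show "s \<in> spanV {b}"
    proof (rule ccontr)
      assume "s \<notin> spanV {b}"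
      then have "s \<noteq> 0" "s + b \<noteq> 0" by (auto simp: spanV_singleton add_eq_0_iff_eq_fun_bit)
      moreover have "s \<in> Sigma" "s + b \<in> Sigma"
        using V.subspace_add[OF subspace_Sigma(1) _ b(1)] s by auto
      ultimately obtain p1 p2 where "p1 \<in> Pi" "Bf n p1 s = 1" "p2 \<in> Pi" "Bf n p2 (s + b) = 1"
        using exists_Pi_Bf_eq_1 by meson
      then obtain p where "p \<in> Pi" "Bf n p b = 0" "Bf n p s = 1"
        using exists_separating_additive[of Pi "\<lambda>p. Bf n p b" "\<lambda>p. Bf n p s" p1 p2]
          V.subspace_add[OF subspace_Pi(1)] by (auto simp: Bf_add_left Bf_add_right add.commute)
      then show False using s unfolding perp_def by auto
    qed
  qed
qed

end

theorem mainTheorem1: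
  fixes n :: nat and Pi Sigma :: "(nat \<Rightarrow> bit) set" and x :: "nat \<Rightarrow> bit"
  assumes "n \<ge> 2"
    and "totally_singular n Pi" and "dimV Pi = n"
    and "totally_singular n Sigma" and "dimV Sigma = n"
    and "Pi \<inter> Sigma = {0}"
    and "x \<in> Vsp (2*n)" and "Qf n x \<noteq> 0"
  defines "X \<equiv> spanV {x}"
  defines "G \<equiv> perp n X \<inter> Pi"
  defines "H \<equiv> perp n X \<inter> Sigma"
  defines "P \<equiv> perp n G \<inter> Sigma"
  shows "is_subspace n P \<and> P \<subseteq> Sigma \<and> dimV P = 1
       \<and> is_subspace n H \<and> H \<subseteq> Sigma \<and> dimV H = n - 1
       \<and> \<not> P \<subseteq> H"
proof -
  interpret opposite_singular_subspaces n Pi Sigma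
    using assms(2-6) by unfold_locales
  obtain a b where ab: "a \<in> Pi" "b \<in> Sigma" "x = a + b"
    using Vsp_eq_sum[OF assms(7)] by auto
  have "Bf n a b = 1"
    using assms(8) Qf_add[of n a b] ab Pi_singular Sigma_singular
    unfolding totally_singular_def by auto
  then have "b \<noteq> 0" by auto
  have H: "H = {y \<in> Sigma. Bf n a y = 0}"
    using ab subspace_Sigma(2) Bf_eq_0_if_totally_singular[OF Sigma_singular ab(2)]
    unfolding H_def X_def perp_spanV_singleton by (auto simp: Bf_add_left)
  have "G = {p \<in> Pi. Bf n p b = 0}"
    using ab subspace_Pi(2) Bf_eq_0_if_totally_singular[OF Pi_singular ab(1)]
    unfolding G_def X_def perp_spanV_singleton by (auto simp: Bf_add_left Bf_commute[of n _ b])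
  then have P: "P = spanV {b}"
    unfolding P_def using perp_kernel_Int_Sigma[OF ab(2) \<open>b \<noteq> 0\<close>] by simp
  have "dimV H = n - 1"
    unfolding H using dim_kernel_additive[OF subspace_Sigma Bf_add_right ab(2) \<open>Bf n a b = 1\<close>]
    by (simp add: dim_Sigma)
  moreover have "V.subspace H"
    unfolding H by (rule subspace_kernel_additive[OF subspace_Sigma(1) Bf_add_right])
  moreover have "V.subspace P" "P \<subseteq> Sigma" "b \<in> P"
    unfolding P using V.subspace_span V.span_minimal[OF _ subspace_Sigma(1)] V.span_base ab(2)
    by auto
  moreover have "dimV P = 1"
    unfolding P V.dim_span using \<open>b \<noteq> 0\<close> by (simp add: V.dim_eq_card_independent)
  ultimately show ?thesis
    using H \<open>Bf n a b = 1\<close> subspace_Sigma(2) unfolding is_subspace_def by auto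
qed

end
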